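(* Let $Q_\infty=(q_0,q_1,q_2,\dots)$ be an infinite stochastic vector with positive coordinates, fix a GLS-expansion with cylinder lengths given by $Q_\infty$, and let $V=\{i_1,i_2,\dots,i_k,i_{k+1},\dots\}\subset\mathbb{N}_0$ be an infinite set. If the equation $\sum_{i\in V} q_i^x=1$ has no roots on $[0,1]$, then \[\dim_H\bigl(C[\mathit{GLS},V]\bigr)=\lim_{k\to\infty}\dim_H\bigl(C[\mathit{GLS},V_k]\bigr),\] where $V_k=\{i_1,i_2,\dots,i_k\}$, $k\in\mathbb{N}$, $k\ge 2$.
   Context: GLS-expansion: Let $Q_\infty=(q_0,q_1,\dots)$ be a stochastic vector with positive coordinates ($q_i>0$, $\sum_{i\ge 0} q_i=1$). Choose closed intervals $\Delta_i=[a_i,b_i]\subset[0,1]$, $i\in\mathbb{N}_0$, with pairwise disjoint interiors and $|\Delta_i|=q_i$ (cylinders of rank 1). Let $f_i:[0,1]\to\Delta_i$ be the increasing affine bijection. The cylinders of rank $n$ are $\Delta_{i_1i_2\dots i_n}=f_{i_1}\circ\dots\circ f_{i_n}([0,1])$, so the placement of $\Delta_{i_1\dots i_n}$ inside $\Delta_{i_1\dots i_{n-1}}$ is the same as that of $\Delta_{i_n}$ inside $[0,1]$ and $|\Delta_{i_1\dots i_n}|=q_{i_1}\cdots q_{i_n}$. For any sequence $(i_k)$ in $\mathbb{N}_0$, $\bigcap_k \Delta_{i_1\dots i_k}$ is a single point, denoted $\Delta^{\mathit{GLS}}_{i_1i_2\dots}$. For $W\subset\mathbb{N}_0$, $C[\mathit{GLS},W]=\{\Delta^{\mathit{GLS}}_{\alpha_1\alpha_2\dots}:\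 \alpha_k\in W \text{ for all } k\}$. *)

theory Defs
  imports "HOL-Analysis.Analysis"
begin

definition diam_pow :: "real \<Rightarrow> real set \<Rightarrow> real" where
  "diam_pow s U = (if U = {} then 0 else if s = 0 then 1 else diameter U powr s)"

definition hausdorff_content :: "real \<Rightarrow> real \<Rightarrow> real set \<Rightarrow> ennreal" where
  "hausdorff_content s \<delta> A =
     (INF U \<in> {U :: nat \<Rightarrow> real set. A \<subseteq> (\<Union>n. U n) \<and> (\<forall>n. bounded (U n) \<and> diameter (U n) \<le> \<delta>)}.
        (\<Sum>n. ennreal (diam_pow s (U n))))"

definition hausdorff_measure :: "real \<Rightarrow> real set \<Rightarrow> ennreal" where
  "hausdorff_measure s A = (SUP \<delta> \<in> {0<..}. hausdorff_content s \<delta> A)"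

definition hausdorff_dim :: "real set \<Rightarrow> real" where
  "hausdorff_dim A = Inf {s. 0 \<le> s \<and> hausdorff_measure s A = 0}"

definition gls_map :: "(nat \<Rightarrow> real) \<Rightarrow> (nat \<Rightarrow> real) \<Rightarrow> nat \<Rightarrow> real \<Rightarrow> real" where
  "gls_map q a i x = a i + q i * x"

text \<open>Cylinder Delta_{i1...in} = f_{i1} o ... o f_{in} ([0,1]).\<close>
definition gls_cyl :: "(nat \<Rightarrow> real) \<Rightarrow> (nat \<Rightarrow> real) \<Rightarrow> nat list \<Rightarrow> real set" where
  "gls_cyl q a ws = (foldr (\<lambda>i g. gls_map q a i \<circ> g) ws id) ` {0..1}"

text \<open>The point Delta^GLS_{alpha_1 alpha_2 ...}: the unique point of the nested intersection
  (the sequence alpha is indexed from 0 here).\<close>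
definition gls_point :: "(nat \<Rightarrow> real) \<Rightarrow> (nat \<Rightarrow> real) \<Rightarrow> (nat \<Rightarrow> nat) \<Rightarrow> real" where
  "gls_point q a \<alpha> = (THE x. x \<in> (\<Inter>n. gls_cyl q a (map \<alpha> [0..<n])))"

definition gls_C :: "(nat \<Rightarrow> real) \<Rightarrow> (nat \<Rightarrow> real) \<Rightarrow> nat set \<Rightarrow> real set" where
  "gls_C q a W = {gls_point q a \<alpha> | \<alpha>. \<forall>k. \<alpha> k \<in> W}"

definition gls_system :: "(nat \<Rightarrow> real) \<Rightarrow> (nat \<Rightarrow> real) \<Rightarrow> bool" where
  "gls_system q a \<longleftrightarrow>
     (\<forall>i. 0 < q i) \<and> q sums 1 \<and>
     (\<forall>i. {a i .. a i + q i} \<subseteq> {0..1}) \<and>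
     (\<forall>i j. i \<noteq> j \<longrightarrow> {a i <..< a i + q i} \<inter> {a j <..< a j + q j} = {})"

end

theory Submission
  imports Defs "HOL-Library.Sublist"
begin

text \<open>Let \<open>s\<^sub>V\<close> be the infimum of the exponents \<open>t\<close> at which the partial sums of
  \<open>\<Sum>i\<in>V. q i powr t\<close> stay below a constant \<open>c < 1\<close>; by hypothesis \<open>t = 1\<close> is such an
  exponent. Covering \<open>C[GLS, V]\<close> by its cylinders of rank \<open>n\<close> gives total weight at most
  \<open>c\<^sup>n\<close>, so \<open>dim\<^sub>H C[GLS, V] \<le> s\<^sub>V\<close>. Conversely, for \<open>t < s\<^sub>V\<close> some finite
  \<open>F \<subseteq> V\<close> has \<open>\<Sum>i\<in>F. q i powr t > 1\<close>. For a finite digit set \<open>W\<close> with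
  \<open>\<Sum>i\<in>W. q i powr s \<ge> 1\<close>, any cover of \<open>C[GLS, W]\<close> by small intervals can be refined to
  cylinders; each interval of length \<open>\<rho>\<close> meets only boundedly many maximal cylinders of length
  about \<open>\<rho>\<close>, while the weights \<open>|\<Delta>|\<^sup>s\<close> of the refining cylinders sum to at least 1.
  Hence \<open>H\<^sup>s(C[GLS, W]) > 0\<close>. As \<open>F \<subseteq> V\<^sub>k\<close> for large \<open>k\<close>, eventually
  \<open>dim\<^sub>H C[GLS, V\<^sub>k] \<ge> t\<close>, and monotonicity of the dimension squeezes both limits
  to \<open>s\<^sub>V\<close>.\<close>

lemma diam_pow_empty [simp]: "diam_pow s {} = 0"
  by (simp add: diam_pow_def)

lemma diam_pow_nonneg: "0 \<le> diam_pow s U"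
  by (simp add: diam_pow_def)

lemma hausdorff_content_le_countable_cover:
  fixes G :: "'a :: countable \<Rightarrow> real set"
  assumes cover: "A \<subseteq> (\<Union>w\<in>P. G w)" and \<delta>: "0 \<le> \<delta>"
    and G: "\<And>w. w \<in> P \<Longrightarrow> bounded (G w) \<and> diameter (G w) \<le> \<delta>"
    and sums: "\<And>P'. finite P' \<Longrightarrow> P' \<subseteq> P \<Longrightarrow> (\<Sum>w\<in>P'. diam_pow s (G w)) \<le> B"
  shows "hausdorff_content s \<delta> A \<le> ennreal B"
proof -
  define good where "good m \<longleftrightarrow> m \<in> range (to_nat :: 'a \<Rightarrow> nat) \<and> (from_nat m :: 'a) \<in> P" for m
  define U where "U m = (if good m then G (from_nat m) else {})" for m
  have "A \<subseteq> (\<Union>m. U m)"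
  proof
    fix x assume "x \<in> A"
    then obtain w where "w \<in> P" "x \<in> G w" using cover by blast
    hence "good (to_nat w)" "x \<in> U (to_nat w)" by (auto simp: good_def U_def)
    thus "x \<in> (\<Union>m. U m)" by blast
  qed
  moreover have "bounded (U m) \<and> diameter (U m) \<le> \<delta>" for m
    using G \<delta> by (simp add: U_def good_def)
  ultimately have "hausdorff_content s \<delta> A \<le> (\<Sum>m. ennreal (diam_pow s (U m)))"
    unfolding hausdorff_content_def by (intro INF_lower) auto
  also have "\<dots> \<le> ennreal B"
  proof (rule suminf_le_const[OF summableI])
    fix N
    have inj: "inj_on (from_nat :: nat \<Rightarrow> 'a) {m \<in> {..<N}. good m}"
      by (auto simp: inj_on_def good_def)
    have "(\<Sum>m<N. diam_pow s (U m)) = (\<Sum>m<N. if good m then diam_pow s (G (from_nat m)) else 0)"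
      by (rule sum.cong) (auto simp: U_def)
    also have "\<dots> = (\<Sum>m \<in> {m \<in> {..<N}. good m}. diam_pow s (G (from_nat m)))"
      by (rule sum.inter_filter[symmetric]) simp
    also have "\<dots> = (\<Sum>w \<in> from_nat ` {m \<in> {..<N}. good m}. diam_pow s (G w))"
      by (rule sum.reindex[OF inj, unfolded comp_def, symmetric])
    also have "\<dots> \<le> B" by (rule sums) (auto simp: good_def)
    finally show "(\<Sum>m<N. ennreal (diam_pow s (U m))) \<le> ennreal B"
      by (simp add: sum_ennreal diam_pow_nonneg ennreal_leI)
  qed
  finally show ?thesis .
qed

lemma hausdorff_content_mono:
  "A \<subseteq> B \<Longrightarrow> hausdorff_content s \<delta> A \<le> hausdorff_content s \<delta> B"
  unfolding hausdorff_content_def by (rule INF_superset_mono) auto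

lemma hausdorff_measure_mono:
  "A \<subseteq> B \<Longrightarrow> hausdorff_measure s A \<le> hausdorff_measure s B"
  unfolding hausdorff_measure_def by (rule SUP_mono) (use hausdorff_content_mono in blast)

lemma hausdorff_measure_0_nonempty:
  assumes "A \<noteq> {}"
  shows "hausdorff_measure 0 A \<noteq> 0"
proof -
  obtain x where x: "x \<in> A" using assms by blast
  have "1 \<le> hausdorff_content 0 1 A"
    unfolding hausdorff_content_def
  proof (rule INF_greatest, clarify)
    fix U :: "nat \<Rightarrow> real set"
    assume "A \<subseteq> (\<Union>n. U n)"
    then obtain n where "x \<in> U n" using x by blast
    hence "ennreal (diam_pow 0 (U n)) = 1" by (auto simp: diam_pow_def)
    moreover have "ennreal (diam_pow 0 (U n)) \<le> (\<Sum>j. ennreal (diam_pow 0 (U j)))"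
      using sum_le_suminf[OF summableI, of "{n}" "\<lambda>j. ennreal (diam_pow 0 (U j))"] by simp
    ultimately show "1 \<le> (\<Sum>j. ennreal (diam_pow 0 (U j)))" by simp
  qed
  also have "\<dots> \<le> hausdorff_measure 0 A"
    unfolding hausdorff_measure_def by (rule SUP_upper) simp
  finally show ?thesis by auto
qed

lemma hausdorff_dim_le:
  "0 \<le> t \<Longrightarrow> hausdorff_measure t A = 0 \<Longrightarrow> hausdorff_dim A \<le> t"
  unfolding hausdorff_dim_def by (rule cInf_lower) (auto intro: bdd_belowI[of _ 0])

lemma hausdorff_dim_mono:
  assumes "A \<subseteq> B" "0 \<le> t" "hausdorff_measure t B = 0"
  shows "hausdorff_dim A \<le> hausdorff_dim B"
  unfolding hausdorff_dim_def
proof (rule cInf_superset_mono)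
  show "{s. 0 \<le> s \<and> hausdorff_measure s B = 0} \<noteq> {}" using assms(2,3) by blast
  show "bdd_below {s. 0 \<le> s \<and> hausdorff_measure s A = 0}" by (auto intro: bdd_belowI[of _ 0])
  show "{s. 0 \<le> s \<and> hausdorff_measure s B = 0} \<subseteq> {s. 0 \<le> s \<and> hausdorff_measure s A = 0}"
    using hausdorff_measure_mono[OF assms(1)]
    by (metis (mono_tags, lifting) le_zero_eq mem_Collect_eq subsetI)
qed

lemma hausdorff_dim_ge:
  assumes "0 \<le> t'" "hausdorff_measure t' A = 0"
    and "\<And>s. 0 \<le> s \<Longrightarrow> s < t \<Longrightarrow> hausdorff_measure s A \<noteq> 0"
  shows "t \<le> hausdorff_dim A"
  unfolding hausdorff_dim_def using assms by (intro cInf_greatest) (auto simp: not_less[symmetric])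

definition words :: "'a set \<Rightarrow> nat \<Rightarrow> 'a list set" where
  "words W n = {w. set w \<subseteq> W \<and> length w = n}"

lemma words_Suc: "words W (Suc n) = (\<lambda>(i, w). i # w) ` (W \<times> words W n)"
  by (auto simp: words_def length_Suc_conv image_def)

lemma finite_words: "finite W \<Longrightarrow> finite (words W n)"
  unfolding words_def by (rule finite_lists_length_eq)

lemma sum_prod_list_words:
  fixes g :: "'a \<Rightarrow> 'b :: comm_semiring_1"
  assumes "finite W"
  shows "(\<Sum>w\<in>words W n. prod_list (map g w)) = (sum g W) ^ n"
proof (induction n)
  case 0
  have "words W 0 = {[]}" by (auto simp: words_def)
  thus ?case by simp
next
  case (Suc n)
  have inj: "inj_on (\<lambda>(i, w). i # w) (W \<times> words W n)" by (auto simp: inj_on_def)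
  have "(\<Sum>w\<in>words W (Suc n). prod_list (map g w))
      = (\<Sum>(i, w)\<in>W \<times> words W n. g i * prod_list (map g w))"
    unfolding words_Suc sum.reindex[OF inj] by (simp add: case_prod_beta comp_def)
  also have "\<dots> = (\<Sum>i\<in>W. g i) * (\<Sum>w\<in>words W n. prod_list (map g w))"
    by (simp add: sum.cartesian_product[symmetric] sum_product)
  finally show ?case using Suc by simp
qed

lemma words_extending:
  assumes "set u \<subseteq> W" "length u \<le> m"
  shows "{w \<in> words W m. prefix u w} = (\<lambda>x. u @ x) ` words W (m - length u)"
  using assms by (auto simp: words_def prefix_def image_def)

lemma sum_le_sum_over_cover:
  fixes f :: "'a \<Rightarrow> 'b :: ordered_comm_monoid_add"
  assumes "finite N" "\<And>n. n \<in> N \<Longrightarrow> finite (A n)" "P \<subseteq> (\<Union>n\<in>N. A n)"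
    and "\<And>x. 0 \<le> f x"
  shows "sum f P \<le> (\<Sum>n\<in>N. sum f (A n))"
proof -
  have "sum f P \<le> sum f (snd ` Sigma N A)"
    using assms by (intro sum_mono2 finite_imageI finite_SigmaI) force+
  also have "\<dots> \<le> (\<Sum>x\<in>Sigma N A. f (snd x))"
    using sum_image_le[of "Sigma N A" f snd] assms by (simp add: comp_def)
  also have "\<dots> = (\<Sum>n\<in>N. sum f (A n))"
    using assms by (subst sum.Sigma) (auto simp: case_prod_beta)
  finally show ?thesis .
qed

definition word_weight :: "(nat \<Rightarrow> real) \<Rightarrow> real \<Rightarrow> nat list \<Rightarrow> real" where
  "word_weight q s w = prod_list (map (\<lambda>i. q i powr s) w)"

lemma word_weight_simps [simp]:
  "word_weight q s [] = 1"
  "word_weight q s (i # w) = q i powr s * word_weight q s w"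
  "word_weight q s (u @ v) = word_weight q s u * word_weight q s v"
  by (auto simp: word_weight_def)

lemma word_weight_nonneg: "0 \<le> word_weight q s w"
  unfolding word_weight_def by (induction w) auto

lemma sum_word_weight_words:
  "finite W \<Longrightarrow> (\<Sum>w\<in>words W n. word_weight q s w) = (\<Sum>i\<in>W. q i powr s) ^ n"
  unfolding word_weight_def by (rule sum_prod_list_words)

lemma sum_word_weight_extending:
  assumes "finite W" "set u \<subseteq> W" "length u \<le> m"
  shows "(\<Sum>w \<in> {w \<in> words W m. prefix u w}. word_weight q s w)
           = word_weight q s u * (\<Sum>i\<in>W. q i powr s) ^ (m - length u)"
  unfolding words_extending[OF assms(2,3)]
  by (simp add: sum.reindex inj_on_def sum_distrib_left[symmetric]
      sum_word_weight_words[OF assms(1)])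

lemma sum_word_weight_le_power:
  assumes "finite P" "P \<subseteq> words W n"
    and "\<And>F. finite F \<Longrightarrow> F \<subseteq> W \<Longrightarrow> (\<Sum>i\<in>F. q i powr t) \<le> c"
  shows "(\<Sum>w\<in>P. word_weight q t w) \<le> c ^ n"
proof -
  define L where "L = \<Union>(set ` P)"
  have L: "finite L" "L \<subseteq> W" using assms(1,2) by (auto simp: L_def words_def)
  have "(\<Sum>w\<in>P. word_weight q t w) \<le> (\<Sum>w\<in>words L n. word_weight q t w)"
    using assms(2) L(1)
    by (intro sum_mono2 finite_words word_weight_nonneg) (auto simp: L_def words_def)
  also have "\<dots> = (\<Sum>i\<in>L. q i powr t) ^ n" by (rule sum_word_weight_words[OF L(1)])
  also have "\<dots> \<le> c ^ n" using assms(3)[OF L] by (intro power_mono) (auto intro: sum_nonneg)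
  finally show ?thesis .
qed

text \<open>A reversed Kraft inequality: if every word of length \<open>m\<close> over \<open>W\<close> extends a word
  of \<open>P\<close>, the weights of \<open>P\<close> sum to at least 1, since extending \<open>u\<close> to length \<open>m\<close> multiplies
  its weight by a power of \<open>\<Sum>i\<in>W. q i powr s \<ge> 1\<close>.\<close>

lemma word_weight_prefix_cover:
  assumes W: "finite W" and S: "1 \<le> (\<Sum>i\<in>W. q i powr s)"
    and P: "P \<subseteq> {u. set u \<subseteq> W \<and> length u \<le> m}"
    and cover: "\<And>w. w \<in> words W m \<Longrightarrow> \<exists>u\<in>P. prefix u w"
  shows "1 \<le> (\<Sum>u\<in>P. word_weight q s u)"
proof -
  define S where "S = (\<Sum>i\<in>W. q i powr s)"
  have finP: "finite P" using finite_lists_length_le[OF W] P finite_subset by blast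
  have "S ^ m = (\<Sum>w\<in>words W m. word_weight q s w)"
    unfolding S_def by (rule sum_word_weight_words[OF W, symmetric])
  also have "\<dots> \<le> (\<Sum>u\<in>P. \<Sum>w\<in>{w \<in> words W m. prefix u w}. word_weight q s w)"
    using cover finP finite_words[OF W]
    by (intro sum_le_sum_over_cover word_weight_nonneg) auto
  also have "\<dots> = (\<Sum>u\<in>P. word_weight q s u * S ^ (m - length u))"
    using P unfolding S_def by (intro sum.cong refl sum_word_weight_extending[OF W]) auto
  also have "\<dots> \<le> (\<Sum>u\<in>P. word_weight q s u * S ^ m)"
    using S unfolding S_def
    by (intro sum_mono mult_left_mono power_increasing word_weight_nonneg) auto
  also have "\<dots> = S ^ m * (\<Sum>u\<in>P. word_weight q s u)"
    by (simp add: sum_distrib_left mult.commute)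
  finally show ?thesis using S unfolding S_def by simp
qed

section \<open>The fan theorem\<close>

fun branch :: "('a list \<Rightarrow> 'a) \<Rightarrow> nat \<Rightarrow> 'a list" where
  "branch ch 0 = []"
| "branch ch (Suc n) = branch ch n @ [ch (branch ch n)]"

lemma branch_eq_map: "branch ch n = map (\<lambda>k. ch (branch ch k)) [0..<n]"
  by (induction n) auto

text \<open>The fan theorem: over a finite alphabet, a bar for all infinite sequences is uniform.
  If not, the words through which arbitrarily long bar-avoiding continuations exist form
  an infinite finitely branching tree, and a branch of it avoids the bar.\<close>

lemma uniform_bar:
  fixes G :: "'a list \<Rightarrow> bool"
  assumes finW: "finite W"
    and bar: "\<And>\<alpha>. (\<And>k. \<alpha> k \<in> W) \<Longrightarrow> \<exists>n. G (map \<alpha> [0..<n])"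
  shows "\<exists>m. \<forall>w\<in>words W m. \<exists>v. prefix v w \<and> G v"
proof (rule ccontr)
  define bad where "bad v \<longleftrightarrow> set v \<subseteq> W \<and>
      (\<forall>m. \<exists>u. set u \<subseteq> W \<and> m \<le> length u \<and> (\<forall>p. prefix p (v @ u) \<longrightarrow> \<not> G p))" for v
  assume "\<not> ?thesis"
  hence "bad []"
    unfolding bad_def
    by (metis (mono_tags) append_Nil empty_subsetI le_refl list.set(1) mem_Collect_eq words_def)
  have step: "\<exists>i\<in>W. bad (v @ [i])" if "bad v" for v
  proof -
    have "\<forall>m. \<exists>u. set u \<subseteq> W \<and> Suc m \<le> length u \<and> (\<forall>p. prefix p (v @ u) \<longrightarrow> \<not> G p)"
      using \<open>bad v\<close> unfolding bad_def by blast
    then obtain U where U: "\<And>m. set (U m) \<subseteq> W" "\<And>m. Suc m \<le> length (U m)"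
        "\<And>m p. prefix p (v @ U m) \<Longrightarrow> \<not> G p"
      by (metis (no_types))
    have Une: "U m \<noteq> []" for m using U(2)[of m] by auto
    have hdW: "hd (U m) \<in> W" for m using U(1) Une hd_in_set by blast
    have "finite (range (\<lambda>m. hd (U m)))" using hdW finW by (meson finite_subset image_subsetI)
    then obtain i where i: "i \<in> range (\<lambda>m. hd (U m))" "infinite ((\<lambda>m. hd (U m)) -` {i})"
      by (rule inf_img_fin_domE) simp
    have "bad (v @ [i])"
      unfolding bad_def
    proof (intro conjI allI)
      show "set (v @ [i]) \<subseteq> W" using \<open>bad v\<close> i(1) hdW by (auto simp: bad_def)
      fix m
      obtain m' where m': "m \<le> m'" "hd (U m') = i"
        using i(2) unfolding infinite_nat_iff_unbounded_le by blast
      have "(v @ [i]) @ tl (U m') = v @ U m'"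
        using m'(2) Une[of m'] by (metis append_Cons append_assoc append_Nil hd_Cons_tl)
      moreover have "set (tl (U m')) \<subseteq> W"
        using U(1)[of m'] Une[of m'] by (meson list.set_sel(2) subset_iff)
      moreover have "m \<le> length (tl (U m'))" using U(2)[of m'] m'(1) by simp
      ultimately show "\<exists>u. set u \<subseteq> W \<and> m \<le> length u \<and> (\<forall>p. prefix p ((v @ [i]) @ u) \<longrightarrow> \<not> G p)"
        using U(3)[of _ m'] by auto
    qed
    thus ?thesis using i(1) hdW by blast
  qed
  define ch where "ch v = (SOME i. i \<in> W \<and> bad (v @ [i]))" for v
  have bad_branch: "bad (branch ch n)" for n
  proof (induction n)
    case (Suc n)
    have "\<exists>i. i \<in> W \<and> bad (branch ch n @ [i])" using step[OF Suc] by blast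
    hence "ch (branch ch n) \<in> W \<and> bad (branch ch n @ [ch (branch ch n)])"
      unfolding ch_def by (rule someI_ex)
    thus ?case by simp
  qed (simp add: \<open>bad []\<close>)
  define \<alpha> where "\<alpha> k = ch (branch ch k)" for k
  have "\<alpha> k \<in> W" for k using bad_branch[of "Suc k"] by (simp add: bad_def \<alpha>_def)
  then obtain n where "G (map \<alpha> [0..<n])" using bar by blast
  moreover have "map \<alpha> [0..<n] = branch ch n" unfolding \<alpha>_def by (rule branch_eq_map[symmetric])
  ultimately show False using bad_branch[of n] unfolding bad_def by (metis prefixI)
qed

lemma bounded_subset_interval:
  fixes U :: "real set"
  assumes "bounded U" "0 < l"
  shows "\<exists>c. U \<subseteq> {c <..< c + (2 * diameter U + 2 * l)}"
proof (cases "U = {}")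
  case False
  then obtain x where x: "x \<in> U" by blast
  have "y \<in> {x - diameter U - l <..< x - diameter U - l + (2 * diameter U + 2 * l)}"
    if "y \<in> U" for y
    using diameter_bounded_bound[OF assms(1) that x] assms(2) by (auto simp: dist_real_def)
  thus ?thesis by blast
qed simp

lemma powr_sum_le:
  fixes r l s :: real
  assumes "0 \<le> r" "0 < l" "0 < s"
  shows "(2 * r + 2 * l) powr s \<le> 4 powr s * (r powr s + l powr s)"
proof -
  have "(2 * r + 2 * l) powr s \<le> (4 * max r l) powr s"
    using assms by (intro powr_mono2) auto
  also have "\<dots> = 4 powr s * max r l powr s" using assms by (simp add: powr_mult)
  also have "\<dots> \<le> 4 powr s * (r powr s + l powr s)" by (intro mult_left_mono) (auto simp: max_def)
  finally show ?thesis .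
qed

lemma sum_powr_enlarged_le:
  fixes r \<eta> :: "nat \<Rightarrow> real"
  assumes "finite N" "0 < s" "0 \<le> \<theta>" "\<And>n. 0 \<le> r n" "\<And>n. 0 < \<eta> n"
    and \<eta>: "\<And>n. \<eta> n powr s \<le> \<theta> / 2 ^ Suc n"
  shows "(\<Sum>n\<in>N. (2 * r n + 2 * \<eta> n) powr s) \<le> 4 powr s * ((\<Sum>n\<in>N. r n powr s) + \<theta>)"
proof -
  have "(\<Sum>n\<in>N. (2 * r n + 2 * \<eta> n) powr s) \<le> (\<Sum>n\<in>N. 4 powr s * (r n powr s + \<theta> * (1/2) ^ Suc n))"
  proof (rule sum_mono)
    fix n
    have "(2 * r n + 2 * \<eta> n) powr s \<le> 4 powr s * (r n powr s + \<eta> n powr s)"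
      by (rule powr_sum_le[OF assms(4,5,2)])
    also have "\<dots> \<le> 4 powr s * (r n powr s + \<theta> * (1/2) ^ Suc n)"
      using \<eta>[of n] by (intro mult_left_mono) (auto simp: power_one_over)
    finally show "(2 * r n + 2 * \<eta> n) powr s \<le> 4 powr s * (r n powr s + \<theta> * (1/2) ^ Suc n)" .
  qed
  also have "\<dots> = 4 powr s * ((\<Sum>n\<in>N. r n powr s) + \<theta> * (\<Sum>n\<in>N. (1/2) ^ Suc n))"
    by (simp only: sum.distrib sum_distrib_left distrib_left)
  also have "\<dots> \<le> 4 powr s * ((\<Sum>n\<in>N. r n powr s) + \<theta>)"
  proof -
    have "(\<Sum>n\<in>N. (1/2::real) ^ Suc n) \<le> (\<Sum>n. (1/2) ^ Suc n)"
      using power_half_series assms(1) by (intro sum_le_suminf) (auto simp: sums_iff)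
    also have "\<dots> = 1" using power_half_series by (simp add: sums_iff)
    finally show ?thesis
      using assms(3) by (intro mult_left_mono add_left_mono) (auto simp: mult_left_le)
  qed
  finally show ?thesis .
qed

lemma powr_gap:
  fixes x c t t' :: real
  assumes "0 < x" "x \<le> c" "t \<le> t'"
  shows "(1 / c) powr (t' - t) * x powr t' \<le> x powr t"
proof -
  have "(1 / c) powr (t' - t) * x powr t' \<le> (1 / x) powr (t' - t) * x powr t'"
    using assms by (intro mult_right_mono powr_mono2) (auto simp: field_simps)
  also have "\<dots> = x powr t"
    using assms(1) by (simp add: powr_def ln_div exp_add[symmetric] algebra_simps)
  finally show ?thesis .
qed

section \<open>Cylinders of a GLS-expansion\<close>

definition cyl_len :: "(nat \<Rightarrow> real) \<Rightarrow> nat list \<Rightarrow> real" where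
  "cyl_len q w = prod_list (map q w)"

fun cyl_left :: "(nat \<Rightarrow> real) \<Rightarrow> (nat \<Rightarrow> real) \<Rightarrow> nat list \<Rightarrow> real" where
  "cyl_left q a [] = 0"
| "cyl_left q a (i # w) = a i + q i * cyl_left q a w"

lemma cyl_len_simps [simp]:
  "cyl_len q [] = 1" "cyl_len q (i # w) = q i * cyl_len q w"
  "cyl_len q (u @ v) = cyl_len q u * cyl_len q v"
  by (auto simp: cyl_len_def)

lemma cyl_left_append: "cyl_left q a (u @ v) = cyl_left q a u + cyl_len q u * cyl_left q a v"
  by (induction u) (auto simp: algebra_simps)

lemma foldr_gls_map:
  "foldr (\<lambda>i g. gls_map q a i \<circ> g) w id x = cyl_left q a w + cyl_len q w * x"
  by (induction w arbitrary: x) (auto simp: gls_map_def algebra_simps)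

lemma prefix_map_upt: "n \<le> m \<Longrightarrow> prefix (map \<alpha> [0..<n]) (map \<alpha> [0..<m])"
  by (metis le_add_diff_inverse map_append prefixI upt_add_eq_append zero_le)

lemma gls_C_mono: "W \<subseteq> W' \<Longrightarrow> gls_C q a W \<subseteq> gls_C q a W'"
  unfolding gls_C_def by blast

lemma gls_C_nonempty: "i \<in> W \<Longrightarrow> gls_C q a W \<noteq> {}"
  unfolding gls_C_def by (auto intro!: exI[of _ "\<lambda>_. i"])

text \<open>The infimum of the subcritical \<open>t\<close> plays the role of the root of
  \<open>\<Sum>i\<in>W. q i powr x = 1\<close>.\<close>

definition subcritical :: "(nat \<Rightarrow> real) \<Rightarrow> nat set \<Rightarrow> real \<Rightarrow> bool" where
  "subcritical q W t \<longleftrightarrow>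
     0 \<le> t \<and> (\<exists>c < 1. \<forall>F. finite F \<and> F \<subseteq> W \<longrightarrow> (\<Sum>i\<in>F. q i powr t) \<le> c)"

lemma subcritical_subset: "W' \<subseteq> W \<Longrightarrow> subcritical q W t \<Longrightarrow> subcritical q W' t"
  unfolding subcritical_def by (meson order_trans)

locale gls =
  fixes q a :: "nat \<Rightarrow> real"
  assumes system: "gls_system q a"
begin

lemma q_pos: "0 < q i"
  using system by (auto simp: gls_system_def)

lemma q_sums: "q sums 1"
  using system by (auto simp: gls_system_def)

lemma a_nonneg: "0 \<le> a i" and a_q_le_1: "a i + q i \<le> 1"
proof -
  have "{a i .. a i + q i} \<subseteq> {0..1}" using system by (simp add: gls_system_def)
  thus "0 \<le> a i" "a i + q i \<le> 1" using q_pos[of i] by auto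
qed

lemma interiors_disjoint: "i \<noteq> j \<Longrightarrow> {a i <..< a i + q i} \<inter> {a j <..< a j + q j} = {}"
  using system by (auto simp: gls_system_def)

lemma q_add_q_le_1: "i \<noteq> j \<Longrightarrow> q i + q j \<le> 1"
proof -
  assume "i \<noteq> j"
  have "sum q {i, j} \<le> suminf q"
    using q_sums q_pos by (intro sum_le_suminf) (auto simp: sums_iff less_imp_le)
  thus ?thesis using \<open>i \<noteq> j\<close> q_sums by (simp add: sums_iff)
qed

text \<open>Since there are at least two digits, all \<open>q i\<close> are bounded by a constant below 1.\<close>

definition q_bound :: real where
  "q_bound = max (1 - q 0) (1 - q 1)"

lemma q_le_q_bound: "q i \<le> q_bound"
  using q_add_q_le_1[of i 0] q_add_q_le_1[of i 1] by (cases "i = 0") (auto simp: q_bound_def)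

lemma q_bound_pos: "0 < q_bound" and q_bound_less_1: "q_bound < 1"
  using q_pos[of 0] q_pos[of 1] q_le_q_bound[of 0] by (auto simp: q_bound_def)

lemma q_le_1: "q i \<le> 1"
  using q_le_q_bound[of i] q_bound_less_1 by simp

lemma cyl_len_pos: "0 < cyl_len q w"
  by (induction w) (auto simp: q_pos)

lemma cyl_len_le_power: "cyl_len q w \<le> q_bound ^ length w"
  by (induction w)
    (auto intro!: mult_mono simp: q_le_q_bound q_pos q_bound_pos less_imp_le cyl_len_pos)

lemma cyl_len_le_1: "cyl_len q w \<le> 1"
  using cyl_len_le_power[of w] q_bound_pos q_bound_less_1 power_le_one[of q_bound "length w"]
  by linarith

lemma gls_cyl_eq: "gls_cyl q a w = {cyl_left q a w .. cyl_left q a w + cyl_len q w}"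
proof -
  have "gls_cyl q a w = (\<lambda>x. cyl_len q w * x + cyl_left q a w) ` {0..1}"
    by (simp add: gls_cyl_def foldr_gls_map[abs_def] image_def add.commute)
  thus ?thesis using cyl_len_pos[of w] by (simp add: image_affinity_atLeastAtMost)
qed

lemma cyl_endpoints_bounds: "0 \<le> cyl_left q a w \<and> cyl_left q a w + cyl_len q w \<le> 1"
proof (induction w)
  case (Cons i w)
  have "q i * (cyl_left q a w + cyl_len q w) \<le> q i * 1"
    using Cons q_pos[of i] by (intro mult_left_mono) auto
  thus ?case using Cons a_nonneg[of i] a_q_le_1[of i] q_pos[of i] by (simp add: algebra_simps)
qed simp

lemma gls_cyl_append_subset: "gls_cyl q a (u @ v) \<subseteq> gls_cyl q a u"
proof -
  have "cyl_len q u * (cyl_left q a v + cyl_len q v) \<le> cyl_len q u * 1"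
    using cyl_endpoints_bounds[of v] cyl_len_pos[of u] by (intro mult_left_mono) auto
  thus ?thesis
    using cyl_endpoints_bounds[of v] cyl_len_pos[of u]
    by (auto simp: gls_cyl_eq cyl_left_append algebra_simps)
qed

lemma gls_cyl_prefix_subset: "prefix u w \<Longrightarrow> gls_cyl q a w \<subseteq> gls_cyl q a u"
  by (auto simp: prefix_def dest!: gls_cyl_append_subset[THEN subsetD])

lemma dist_le_cyl_len:
  "x \<in> gls_cyl q a w \<Longrightarrow> y \<in> gls_cyl q a w \<Longrightarrow> dist x y \<le> cyl_len q w"
  by (auto simp: gls_cyl_eq dist_real_def)

lemma gls_point_in_cyl: "gls_point q a \<alpha> \<in> gls_cyl q a (map \<alpha> [0..<n])"
proof -
  let ?S = "\<lambda>n. gls_cyl q a (map \<alpha> [0..<n])"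
  have "\<exists>x. \<Inter>(range ?S) = {x}"
  proof (rule decreasing_closed_nest_sing)
    show "closed (?S n)" for n by (simp add: gls_cyl_eq)
    show "?S n \<noteq> {}" for n using cyl_len_pos[of "map \<alpha> [0..<n]"] by (simp add: gls_cyl_eq)
    show "?S n \<subseteq> ?S m" if "m \<le> n" for m n
      using that by (intro gls_cyl_prefix_subset prefix_map_upt)
    show "\<exists>n. \<forall>x\<in>?S n. \<forall>y\<in>?S n. dist x y < \<epsilon>" if eps: "\<epsilon> > 0" for \<epsilon>
    proof -
      obtain n where n: "q_bound ^ n < \<epsilon>" using real_arch_pow_inv[OF eps q_bound_less_1] by blast
      have "cyl_len q (map \<alpha> [0..<n]) < \<epsilon>" using cyl_len_le_power[of "map \<alpha> [0..<n]"] n by simp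
      thus ?thesis using dist_le_cyl_len by (meson le_less_trans)
    qed
  qed
  then obtain x where x: "\<Inter>(range ?S) = {x}" by blast
  have "gls_point q a \<alpha> = x" unfolding gls_point_def x by simp
  thus ?thesis using x by blast
qed

lemma word_weight_eq: "word_weight q s w = cyl_len q w powr s"
  by (induction w) (auto simp: powr_mult q_pos less_imp_le cyl_len_pos)

lemma diam_pow_gls_cyl: "0 \<le> s \<Longrightarrow> diam_pow s (gls_cyl q a w) = word_weight q s w"
  using cyl_len_pos[of w] by (auto simp: diam_pow_def gls_cyl_eq word_weight_eq)

subsection \<open>Upper bound\<close>

lemma hausdorff_content_gls_C_le_power:
  assumes t: "0 \<le> t" and n: "q_bound ^ n \<le> \<delta>"
    and sums_le: "\<And>F. finite F \<Longrightarrow> F \<subseteq> W \<Longrightarrow> (\<Sum>i\<in>F. q i powr t) \<le> c"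
  shows "hausdorff_content t \<delta> (gls_C q a W) \<le> ennreal (c ^ n)"
proof (rule hausdorff_content_le_countable_cover[where P = "words W n" and G = "gls_cyl q a"])
  show "gls_C q a W \<subseteq> (\<Union>w\<in>words W n. gls_cyl q a w)"
  proof
    fix x assume "x \<in> gls_C q a W"
    then obtain \<alpha> where "x = gls_point q a \<alpha>" "\<forall>k. \<alpha> k \<in> W" by (auto simp: gls_C_def)
    moreover from this(2) have "map \<alpha> [0..<n] \<in> words W n" by (auto simp: words_def)
    ultimately show "x \<in> (\<Union>w\<in>words W n. gls_cyl q a w)" using gls_point_in_cyl by blast
  qed
  show "0 \<le> \<delta>" using n q_bound_pos by (meson order_trans zero_le_power less_imp_le)
  show "bounded (gls_cyl q a w) \<and> diameter (gls_cyl q a w) \<le> \<delta>" if "w \<in> words W n" for w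
    using that cyl_len_le_power[of w] cyl_len_pos[of w] n by (auto simp: words_def gls_cyl_eq)
  show "(\<Sum>w\<in>P. diam_pow t (gls_cyl q a w)) \<le> c ^ n" if "finite P" "P \<subseteq> words W n" for P
    using sum_word_weight_le_power[OF that sums_le] by (simp add: diam_pow_gls_cyl[OF t])
qed

lemma hausdorff_content_gls_C_eq_0:
  assumes t: "0 \<le> t" and c: "c < 1" and \<delta>: "0 < \<delta>"
    and sums_le: "\<And>F. finite F \<Longrightarrow> F \<subseteq> W \<Longrightarrow> (\<Sum>i\<in>F. q i powr t) \<le> c"
  shows "hausdorff_content t \<delta> (gls_C q a W) = 0"
proof (rule antisym[OF ennreal_le_epsilon], simp_all)
  fix \<epsilon> :: real assume "0 < \<epsilon>"
  have "0 \<le> c" using sums_le[of "{}"] by simp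
  obtain n1 where n1: "q_bound ^ n1 < \<delta>" using real_arch_pow_inv[OF \<delta> q_bound_less_1] by blast
  obtain n2 where n2: "c ^ n2 < \<epsilon>" using real_arch_pow_inv[OF \<open>0 < \<epsilon>\<close> c] by blast
  define n where "n = max n1 n2"
  have "q_bound ^ n \<le> q_bound ^ n1"
    unfolding n_def using q_bound_pos q_bound_less_1 by (intro power_decreasing) auto
  hence "hausdorff_content t \<delta> (gls_C q a W) \<le> ennreal (c ^ n)"
    using n1 by (intro hausdorff_content_gls_C_le_power[OF t _ sums_le]) auto
  moreover have "c ^ n \<le> c ^ n2" unfolding n_def using \<open>0 \<le> c\<close> c by (intro power_decreasing) auto
  hence "ennreal (c ^ n) \<le> ennreal \<epsilon>" using n2 by (simp add: ennreal_leI)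
  ultimately show "hausdorff_content t \<delta> (gls_C q a W) \<le> ennreal \<epsilon>" by (rule order_trans)
qed

lemma hausdorff_measure_gls_C_eq_0:
  "subcritical q W t \<Longrightarrow> hausdorff_measure t (gls_C q a W) = 0"
  unfolding hausdorff_measure_def subcritical_def
  using hausdorff_content_gls_C_eq_0 by auto

subsection \<open>Lower bound\<close>

definition cyl_interior :: "nat list \<Rightarrow> real set" where
  "cyl_interior w = {cyl_left q a w <..< cyl_left q a w + cyl_len q w}"

lemma cyl_interior_subset: "cyl_interior w \<subseteq> gls_cyl q a w"
  by (auto simp: cyl_interior_def gls_cyl_eq)

lemma cyl_interior_append_subset: "cyl_interior (u @ v) \<subseteq> cyl_interior u"
  using gls_cyl_append_subset[of u v] cyl_len_pos[of "u @ v"]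
  unfolding gls_cyl_eq cyl_interior_def by (auto simp del: cyl_len_simps)

lemma cyl_interior_disjoint:
  assumes "u \<parallel> v"
  shows "cyl_interior u \<inter> cyl_interior v = {}"
proof -
  obtain p i x j y where ij: "i \<noteq> j" and uv: "u = p @ i # x" "v = p @ j # y"
    using parallel_decomp[OF assms] by blast
  have child: "z \<in> cyl_interior (p @ [k]) \<longleftrightarrow>
      (z - cyl_left q a p) / cyl_len q p \<in> {a k <..< a k + q k}" for z k
    using cyl_len_pos[of p] by (simp add: cyl_interior_def cyl_left_append field_simps)
  have "cyl_interior (p @ [i]) \<inter> cyl_interior (p @ [j]) = {}"
    using interiors_disjoint[OF ij] unfolding set_eq_iff by (auto simp only: child Int_iff)
  moreover have "cyl_interior u \<subseteq> cyl_interior (p @ [i])" "cyl_interior v \<subseteq> cyl_interior (p @ [j])"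
    using cyl_interior_append_subset[of "p @ [i]" x] cyl_interior_append_subset[of "p @ [j]" y] uv
    by simp_all
  ultimately show ?thesis by blast
qed

text \<open>The words whose cylinders first drop to length at most \<open>\<rho>\<close> and meet the interval
  \<open>(c, c + \<rho>)\<close>. They form an antichain, so their interiors are disjoint; the cylinders lie in
  \<open>[c - \<rho>, c + 2\<rho>]\<close> and have length at least \<open>\<rho> * qmin\<close>, whence there are at most
  \<open>3 / qmin\<close> of them.\<close>

definition stopping_words :: "nat set \<Rightarrow> real \<Rightarrow> real \<Rightarrow> nat list set" where
  "stopping_words W \<rho> c = {u. set u \<subseteq> W \<and> u \<noteq> [] \<and> cyl_len q u \<le> \<rho> \<and> \<rho> < cyl_len q (butlast u)
       \<and> gls_cyl q a u \<inter> {c <..< c + \<rho>} \<noteq> {}}"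

lemma stopping_words_parallel:
  assumes "u \<in> stopping_words W \<rho> c" "v \<in> stopping_words W \<rho> c" "u \<noteq> v"
  shows "u \<parallel> v"
proof -
  have False if H: "u' \<in> stopping_words W \<rho> c" "v' \<in> stopping_words W \<rho> c" "u' \<noteq> v'"
      "prefix u' v'" for u' v'
  proof -
    obtain x where x: "v' = u' @ x" "x \<noteq> []" using H(3,4) by (auto simp: prefix_def)
    have "cyl_len q (butlast v') = cyl_len q u' * cyl_len q (butlast x)"
      using x by (simp add: butlast_append)
    also have "\<dots> \<le> cyl_len q u'"
      using cyl_len_le_1[of "butlast x"] cyl_len_pos[of u'] by (simp add: mult_left_le)
    finally show False using H(1,2) by (simp add: stopping_words_def)
  qed
  thus ?thesis using assms by (auto intro: parallelI)
qed

lemma stopping_words_cyl_len_gt: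
  assumes "u \<in> stopping_words W \<rho> c" and qmin: "\<And>i. i \<in> W \<Longrightarrow> qmin \<le> q i" "0 < qmin"
  shows "\<rho> * qmin < cyl_len q u"
proof -
  have u: "u \<noteq> []" "\<rho> < cyl_len q (butlast u)" "set u \<subseteq> W"
    using assms(1) by (auto simp: stopping_words_def)
  have "cyl_len q u = cyl_len q (butlast u) * q (last u)"
    using u(1) cyl_len_simps(3)[of q "butlast u" "[last u]"] by simp
  moreover have "qmin \<le> q (last u)" using qmin(1) u(1,3) last_in_set by blast
  ultimately show ?thesis
    using u(2) qmin(2) cyl_len_pos[of "butlast u"] by (smt (verit) mult_mono mult_strict_right_mono)
qed

lemma finite_stopping_words:
  assumes "finite W" "0 < \<rho>" "\<And>i. i \<in> W \<Longrightarrow> qmin \<le> q i" "0 < qmin"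
  shows "finite (stopping_words W \<rho> c)"
proof -
  obtain n where n: "q_bound ^ n < \<rho> * qmin"
    using real_arch_pow_inv[of "\<rho> * qmin" q_bound] assms(2,4) q_bound_less_1 by auto
  have "length u \<le> n" if "u \<in> stopping_words W \<rho> c" for u
  proof (rule ccontr)
    assume "\<not> length u \<le> n"
    hence "q_bound ^ length u \<le> q_bound ^ n"
      using q_bound_pos q_bound_less_1 by (intro power_decreasing) auto
    thus False
      using stopping_words_cyl_len_gt[OF that assms(3,4)] cyl_len_le_power[of u] n by linarith
  qed
  hence "stopping_words W \<rho> c \<subseteq> {u. set u \<subseteq> W \<and> length u \<le> n}"
    by (auto simp: stopping_words_def)
  thus ?thesis using finite_lists_length_le[OF \<open>finite W\<close>] finite_subset by blast
qed

lemma sum_cyl_len_stopping_words: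
  assumes "finite W" "0 < \<rho>" "\<And>i. i \<in> W \<Longrightarrow> qmin \<le> q i" "0 < qmin"
  shows "(\<Sum>u\<in>stopping_words W \<rho> c. cyl_len q u) \<le> 3 * \<rho>"
proof -
  let ?A = "stopping_words W \<rho> c"
  have fin: "finite ?A" by (rule finite_stopping_words[OF assms])
  have "disjoint_family_on cyl_interior ?A"
    unfolding disjoint_family_on_def using stopping_words_parallel cyl_interior_disjoint by blast
  hence "(\<Sum>u\<in>?A. cyl_len q u) = measure lborel (\<Union>u\<in>?A. cyl_interior u)"
    using fin cyl_len_pos
    by (subst measure_finite_Union) (auto simp: cyl_interior_def less_imp_le)
  also have "\<dots> \<le> measure lborel {c - \<rho> .. c + 2 * \<rho>}"
  proof (rule measure_mono_fmeasurable)
    show "(\<Union>u\<in>?A. cyl_interior u) \<subseteq> {c - \<rho> .. c + 2 * \<rho>}"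
    proof clarify
      fix u x assume u: "u \<in> ?A" and x: "x \<in> cyl_interior u"
      obtain y where y: "y \<in> gls_cyl q a u" "c < y" "y < c + \<rho>"
        using u by (auto simp: stopping_words_def)
      have "dist x y \<le> \<rho>"
        using dist_le_cyl_len[OF subsetD[OF cyl_interior_subset x] y(1)] u
        by (simp add: stopping_words_def)
      thus "x \<in> {c - \<rho> .. c + 2 * \<rho>}" using y by (auto simp: dist_real_def)
    qed
    show "(\<Union>u\<in>?A. cyl_interior u) \<in> sets lborel" using fin by (auto simp: cyl_interior_def)
    show "{c - \<rho> .. c + 2 * \<rho>} \<in> fmeasurable lborel"
      using assms(2) by (simp add: fmeasurable_def)
  qed
  finally show ?thesis using assms(2) by simp
qed

lemma sum_word_weight_stopping_words:
  assumes "finite W" "0 < \<rho>" "\<And>i. i \<in> W \<Longrightarrow> qmin \<le> q i" "0 < qmin" "0 \<le> s"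
  shows "(\<Sum>u\<in>stopping_words W \<rho> c. word_weight q s u) \<le> 3 / qmin * \<rho> powr s"
proof -
  let ?A = "stopping_words W \<rho> c"
  have "real (card ?A) * (\<rho> * qmin) \<le> (\<Sum>u\<in>?A. cyl_len q u)"
    using stopping_words_cyl_len_gt[OF _ assms(3,4)] sum_mono[of ?A "\<lambda>_. \<rho> * qmin" "cyl_len q"]
    by (simp add: less_imp_le)
  also have "\<dots> \<le> 3 * \<rho>" by (rule sum_cyl_len_stopping_words[OF assms(1-4)])
  finally have card: "real (card ?A) \<le> 3 / qmin"
    using assms(2,4) by (simp add: field_simps)
  have "(\<Sum>u\<in>?A. word_weight q s u) \<le> (\<Sum>u\<in>?A. \<rho> powr s)"
    using assms(5) cyl_len_pos
    by (intro sum_mono)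
      (auto simp: word_weight_eq stopping_words_def less_imp_le intro!: powr_mono2)
  also have "\<dots> = real (card ?A) * \<rho> powr s" by simp
  also have "\<dots> \<le> 3 / qmin * \<rho> powr s" by (rule mult_right_mono[OF card]) simp
  finally show ?thesis .
qed

lemma stopping_word_prefix:
  assumes "set v \<subseteq> W" "gls_cyl q a v \<subseteq> {c <..< c + \<rho>}" "\<rho> < 1"
  shows "\<exists>u. prefix u v \<and> u \<in> stopping_words W \<rho> c"
proof -
  have ends: "cyl_left q a v \<in> gls_cyl q a v" "cyl_left q a v + cyl_len q v \<in> gls_cyl q a v"
    using cyl_len_pos[of v] by (auto simp: gls_cyl_eq)
  hence "cyl_left q a v \<in> {c <..< c + \<rho>}" "cyl_left q a v + cyl_len q v \<in> {c <..< c + \<rho>}"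
    using assms(2) by blast+
  hence "cyl_len q v < \<rho>" by simp
  define P where "P k \<longleftrightarrow> cyl_len q (take k v) \<le> \<rho>" for k
  define k where "k = (LEAST k. P k)"
  have "P (length v)" using \<open>cyl_len q v < \<rho>\<close> by (simp add: P_def)
  hence k: "P k" "k \<le> length v" unfolding k_def by (fact LeastI, fact Least_le)
  have "k \<noteq> 0" using k(1) assms(3) by (auto simp: P_def intro!: Nat.gr0I)
  hence "\<not> P (k - 1)" unfolding k_def by (intro not_less_Least) (simp add: k_def)
  moreover have "prefix (take k v) v" by (rule take_is_prefix)
  moreover have "gls_cyl q a (take k v) \<inter> {c <..< c + \<rho>} \<noteq> {}"
    using ends(1) assms(2) gls_cyl_prefix_subset[OF \<open>prefix (take k v) v\<close>] by blast
  ultimately show ?thesis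
    using k \<open>k \<noteq> 0\<close> assms(1) set_take_subset[of k v]
    by (intro exI[of _ "take k v"]) (auto simp: stopping_words_def butlast_take P_def)
qed

lemma gls_cyl_cover_uniform:
  assumes "finite W" "gls_C q a W \<subseteq> (\<Union>n. J n)" "\<And>n. open (J n)"
  shows "\<exists>m. \<forall>w\<in>words W m. \<exists>v n. prefix v w \<and> gls_cyl q a v \<subseteq> J n"
proof -
  have "\<exists>m n. gls_cyl q a (map \<alpha> [0..<m]) \<subseteq> J n" if \<alpha>: "\<And>k. \<alpha> k \<in> W" for \<alpha>
  proof -
    have "gls_point q a \<alpha> \<in> gls_C q a W" using \<alpha> unfolding gls_C_def by blast
    then obtain n where "gls_point q a \<alpha> \<in> J n" using assms(2) by blast
    then obtain \<epsilon> where \<epsilon>: "\<epsilon> > 0" "ball (gls_point q a \<alpha>) \<epsilon> \<subseteq> J n"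
      using assms(3) openE by blast
    obtain m where m: "q_bound ^ m < \<epsilon>" using real_arch_pow_inv[OF \<epsilon>(1) q_bound_less_1] by blast
    have "gls_cyl q a (map \<alpha> [0..<m]) \<subseteq> ball (gls_point q a \<alpha>) \<epsilon>"
    proof
      fix y assume "y \<in> gls_cyl q a (map \<alpha> [0..<m])"
      hence "dist (gls_point q a \<alpha>) y \<le> q_bound ^ m"
        using dist_le_cyl_len[OF gls_point_in_cyl] cyl_len_le_power[of "map \<alpha> [0..<m]"]
        by (metis length_map length_upt minus_nat.diff_0 order_trans)
      thus "y \<in> ball (gls_point q a \<alpha>) \<epsilon>" using m by simp
    qed
    thus ?thesis using \<epsilon>(2) by blast
  qed
  thus ?thesis using uniform_bar[OF assms(1), of "\<lambda>v. \<exists>n. gls_cyl q a v \<subseteq> J n"] by blast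
qed

lemma interval_cover_weight:
  assumes W: "finite W" and S: "1 \<le> (\<Sum>i\<in>W. q i powr s)" and "0 \<le> s"
    and qmin: "\<And>i. i \<in> W \<Longrightarrow> qmin \<le> q i" "0 < qmin"
    and \<rho>: "\<And>n. 0 < \<rho> n" "\<And>n. \<rho> n < 1"
    and cover: "gls_C q a W \<subseteq> (\<Union>n. {c n <..< c n + \<rho> n})"
  shows "\<exists>N. finite N \<and> qmin / 3 \<le> (\<Sum>n\<in>N. \<rho> n powr s)"
proof -
  obtain m where m: "\<forall>w\<in>words W m. \<exists>v n. prefix v w \<and> gls_cyl q a v \<subseteq> {c n <..< c n + \<rho> n}"
    using gls_cyl_cover_uniform[OF W cover] by auto
  define A where "A n = stopping_words W (\<rho> n) (c n)" for n
  define P where "P = {u. set u \<subseteq> W \<and> length u \<le> m \<and> (\<exists>n. u \<in> A n)}"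
  have "finite P"
    using finite_lists_length_le[OF W, of m] by (rule finite_subset[rotated]) (auto simp: P_def)
  have "1 \<le> (\<Sum>u\<in>P. word_weight q s u)"
  proof (rule word_weight_prefix_cover[OF W S])
    show "P \<subseteq> {u. set u \<subseteq> W \<and> length u \<le> m}" by (auto simp: P_def)
    fix w assume w: "w \<in> words W m"
    then obtain v n where v: "prefix v w" "gls_cyl q a v \<subseteq> {c n <..< c n + \<rho> n}" using m by blast
    have "set v \<subseteq> W" using set_mono_prefix[OF v(1)] w by (auto simp: words_def)
    then obtain u where "prefix u v" "u \<in> A n"
      using stopping_word_prefix[OF _ v(2) \<rho>(2)] by (auto simp: A_def)
    moreover from this(1) have "prefix u w" using v(1) by (rule prefix_order.trans)
    ultimately show "\<exists>u\<in>P. prefix u w"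
      using w set_mono_prefix[of u w] prefix_length_le[of u w]
      by (intro bexI[of _ u]) (auto simp: P_def words_def)
  qed
  have "\<forall>u\<in>P. \<exists>n. u \<in> A n" by (simp add: P_def)
  then obtain n_of where n_of: "\<forall>u\<in>P. u \<in> A (n_of u)" by (rule bchoice[THEN exE])
  have "(\<Sum>u\<in>P. word_weight q s u) \<le> (\<Sum>n\<in>n_of ` P. \<Sum>u\<in>A n. word_weight q s u)"
  proof (rule sum_le_sum_over_cover)
    show "finite (n_of ` P)" using \<open>finite P\<close> by simp
    show "finite (A n)" for n unfolding A_def by (rule finite_stopping_words[OF W \<rho>(1) qmin])
    show "P \<subseteq> (\<Union>n\<in>n_of ` P. A n)" using n_of by blast
  qed (rule word_weight_nonneg)
  also have "\<dots> \<le> (\<Sum>n\<in>n_of ` P. 3 / qmin * \<rho> n powr s)"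
    unfolding A_def using W \<rho>(1) qmin \<open>0 \<le> s\<close>
    by (intro sum_mono sum_word_weight_stopping_words) auto
  finally have "1 \<le> 3 / qmin * (\<Sum>n\<in>n_of ` P. \<rho> n powr s)"
    using \<open>1 \<le> (\<Sum>u\<in>P. word_weight q s u)\<close> by (simp add: sum_distrib_left)
  hence "qmin / 3 \<le> (\<Sum>n\<in>n_of ` P. \<rho> n powr s)" using qmin(2) by (simp add: field_simps)
  thus ?thesis using \<open>finite P\<close> by blast
qed

text \<open>Each covering set \<open>U n\<close> is enlarged to an open interval of length \<open>\<rho> n\<close>, where the
  excess \<open>\<eta> n\<close> is chosen so small that the excesses contribute at most half of the bound
  given by \<open>interval_cover_weight\<close>.\<close>

lemma hausdorff_content_gls_C_ge:
  assumes W: "finite W" and s: "0 < s" and S: "1 \<le> (\<Sum>i\<in>W. q i powr s)"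
    and qmin: "\<And>i. i \<in> W \<Longrightarrow> qmin \<le> q i" "0 < qmin"
  shows "ennreal (qmin / (6 * 4 powr s)) \<le> hausdorff_content s (1/16) (gls_C q a W)"
  unfolding hausdorff_content_def
proof (rule INF_greatest, clarify)
  fix U :: "nat \<Rightarrow> real set"
  assume cov: "gls_C q a W \<subseteq> (\<Union>n. U n)" and U: "\<forall>n. bounded (U n) \<and> diameter (U n) \<le> 1/16"
  define \<theta> where "\<theta> = qmin / (6 * 4 powr s)"
  define r where "r n = diameter (U n)" for n
  define \<eta> where "\<eta> n = min (1/16) ((\<theta> / 2 ^ Suc n) powr (1 / s))" for n
  define \<rho> where "\<rho> n = 2 * r n + 2 * \<eta> n" for n
  have \<theta>: "0 < \<theta>" using qmin(2) by (simp add: \<theta>_def)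
  have r: "0 \<le> r n" "r n \<le> 1/16" for n using U by (auto simp: r_def diameter_ge_0)
  have \<eta>: "0 < \<eta> n" "\<eta> n \<le> 1/16" for n using \<theta> by (auto simp: \<eta>_def)
  have \<eta>_powr: "\<eta> n powr s \<le> \<theta> / 2 ^ Suc n" for n
  proof -
    have "\<eta> n powr s \<le> ((\<theta> / 2 ^ Suc n) powr (1 / s)) powr s"
      using \<eta>(1) s by (intro powr_mono2) (auto simp: \<eta>_def)
    also have "\<dots> = \<theta> / 2 ^ Suc n" using s \<theta> by (simp add: powr_powr)
    finally show ?thesis .
  qed
  have "\<forall>n. \<exists>c. U n \<subseteq> {c <..< c + \<rho> n}"
    using U \<eta>(1) bounded_subset_interval by (simp add: \<rho>_def r_def)
  then obtain c where c: "\<And>n. U n \<subseteq> {c n <..< c n + \<rho> n}" by metis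
  have "0 < \<rho> n" "\<rho> n < 1" for n using r[of n] \<eta>[of n] by (auto simp: \<rho>_def)
  then obtain N where N: "finite N" "qmin / 3 \<le> (\<Sum>n\<in>N. \<rho> n powr s)"
    using interval_cover_weight[OF W S _ qmin, of \<rho> c] cov c s by fastforce
  note N(2)
  also have "(\<Sum>n\<in>N. \<rho> n powr s) \<le> 4 powr s * ((\<Sum>n\<in>N. r n powr s) + \<theta>)"
    unfolding \<rho>_def using N(1) s \<theta> r(1) \<eta>(1) \<eta>_powr by (intro sum_powr_enlarged_le) auto
  finally have "\<theta> \<le> (\<Sum>n\<in>N. r n powr s)"
    by (simp add: \<theta>_def field_simps)
  also have "\<dots> = (\<Sum>n\<in>N. diam_pow s (U n))"
    using s by (intro sum.cong) (auto simp: diam_pow_def r_def)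
  finally have "ennreal \<theta> \<le> (\<Sum>n\<in>N. ennreal (diam_pow s (U n)))"
    by (subst sum_ennreal) (auto simp: diam_pow_def intro: ennreal_leI)
  also have "\<dots> \<le> (\<Sum>n. ennreal (diam_pow s (U n)))"
    by (rule sum_le_suminf[OF summableI N(1)]) simp
  finally show "ennreal \<theta> \<le> (\<Sum>n. ennreal (diam_pow s (U n)))" .
qed

lemma hausdorff_measure_gls_C_ne_0:
  assumes W: "finite W" and s: "0 \<le> s" and S: "1 \<le> (\<Sum>i\<in>W. q i powr s)"
  shows "hausdorff_measure s (gls_C q a W) \<noteq> 0"
proof -
  obtain i where "i \<in> W" using S by fastforce
  show ?thesis
  proof (cases "s = 0")
    case True
    thus ?thesis using hausdorff_measure_0_nonempty gls_C_nonempty[OF \<open>i \<in> W\<close>] by blast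
  next
    case False
    define qmin where "qmin = Min (q ` W)"
    have "0 < qmin" unfolding qmin_def using W \<open>i \<in> W\<close> q_pos by (subst Min_gr_iff) auto
    moreover have "qmin \<le> q j" if "j \<in> W" for j unfolding qmin_def using W that by simp
    ultimately have qmin: "0 < qmin" "\<And>j. j \<in> W \<Longrightarrow> qmin \<le> q j" by blast+
    have "0 < ennreal (qmin / (6 * 4 powr s))" using qmin(1) by simp
    also have "\<dots> \<le> hausdorff_content s (1/16) (gls_C q a W)"
      using False s by (intro hausdorff_content_gls_C_ge[OF W _ S qmin(2,1)]) auto
    also have "\<dots> \<le> hausdorff_measure s (gls_C q a W)"
      unfolding hausdorff_measure_def by (rule SUP_upper) simp
    finally show ?thesis by simp
  qed
qed

subsection \<open>Convergence of the dimensions\<close>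

lemma subcritical_1:
  assumes "\<not> (q has_sum 1) V"
  shows "subcritical q V 1"
proof -
  have q_nonneg: "0 \<le> q i" for i using q_pos less_imp_le by blast
  have "(q has_sum 1) UNIV" by (rule sums_nonneg_imp_has_sum[OF q_sums q_nonneg])
  hence summable: "q summable_on UNIV" "q summable_on V"
    using has_sum_imp_summable summable_on_subset_banach by blast+
  have "infsum q V \<le> infsum q UNIV"
    using summable by (intro infsum_mono_neutral) (auto simp: q_nonneg)
  also have "infsum q UNIV = 1" using \<open>(q has_sum 1) UNIV\<close> by (rule infsumI)
  finally have "infsum q V \<le> 1" .
  moreover have "infsum q V \<noteq> 1"
    using assms has_sum_infsum[OF summable(2)] by metis
  moreover have "(\<Sum>i\<in>F. q i powr 1) \<le> infsum q V" if "finite F" "F \<subseteq> V" for F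
  proof -
    have "infsum q F \<le> infsum q V"
      using that by (intro infsum_mono_neutral[OF _ summable(2)]) (auto simp: q_nonneg)
    thus ?thesis using that q_nonneg by (simp add: abs_of_nonneg)
  qed
  ultimately show ?thesis unfolding subcritical_def by (intro conjI exI[of _ "infsum q V"]) auto
qed

lemma exists_finite_supercritical:
  assumes "0 \<le> t" "t < t'" "\<not> subcritical q W t'"
  shows "\<exists>F. finite F \<and> F \<subseteq> W \<and> 1 < (\<Sum>i\<in>F. q i powr t)"
proof -
  define \<kappa> where "\<kappa> = (1 / q_bound) powr (t' - t)"
  have "1 < \<kappa>"
    unfolding \<kappa>_def using q_bound_pos q_bound_less_1 assms(2) by (intro gr_one_powr) auto
  hence "\<not> (\<forall>F. finite F \<and> F \<subseteq> W \<longrightarrow> (\<Sum>i\<in>F. q i powr t') \<le> 1 / \<kappa>)"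
    using assms unfolding subcritical_def by auto
  then obtain F where F: "finite F" "F \<subseteq> W" "1 / \<kappa> < (\<Sum>i\<in>F. q i powr t')"
    by (auto simp: not_le)
  have "1 < \<kappa> * (\<Sum>i\<in>F. q i powr t')" using F(3) \<open>1 < \<kappa>\<close> by (simp add: field_simps)
  also have "\<dots> \<le> (\<Sum>i\<in>F. q i powr t)"
    unfolding \<kappa>_def sum_distrib_left using assms(2)
    by (intro sum_mono powr_gap q_pos q_le_q_bound) auto
  finally show ?thesis using F(1,2) by blast
qed

lemma hausdorff_dim_gls_C_le:
  assumes "subcritical q W u"
  shows "hausdorff_dim (gls_C q a W) \<le> Inf {t. subcritical q W t}"
proof (rule cInf_greatest)
  show "{t. subcritical q W t} \<noteq> {}" using assms by blast
  show "hausdorff_dim (gls_C q a W) \<le> t" if "t \<in> {t. subcritical q W t}" for t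
    using that hausdorff_measure_gls_C_eq_0 by (intro hausdorff_dim_le) (auto simp: subcritical_def)
qed

lemma le_hausdorff_dim_gls_C:
  assumes "finite W" "1 \<le> (\<Sum>i\<in>W. q i powr t)" "0 \<le> u" "hausdorff_measure u (gls_C q a W) = 0"
  shows "t \<le> hausdorff_dim (gls_C q a W)"
proof (rule hausdorff_dim_ge[OF assms(3,4)])
  fix s assume s: "0 \<le> s" "s < t"
  have "(\<Sum>i\<in>W. q i powr t) \<le> (\<Sum>i\<in>W. q i powr s)"
    using s q_pos q_le_1 by (intro sum_mono powr_mono') (auto simp: less_imp_le)
  thus "hausdorff_measure s (gls_C q a W) \<noteq> 0"
    using assms(1,2) s by (intro hausdorff_measure_gls_C_ne_0) auto
qed

lemma eventually_le_hausdorff_dim_gls_C_prefixes: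
  assumes sub: "subcritical q (range e) u" and t: "t < Inf {t. subcritical q (range e) t}"
  shows "\<forall>\<^sub>F k in sequentially. t \<le> hausdorff_dim (gls_C q a (e ` {..<k}))"
proof -
  have null: "0 \<le> u" "hausdorff_measure u (gls_C q a (e ` {..<k})) = 0" for k
    using sub hausdorff_measure_gls_C_eq_0[OF subcritical_subset[OF image_mono[OF subset_UNIV] sub]]
    by (simp_all add: subcritical_def)
  show ?thesis
  proof (cases "t < 0")
    case True
    have "0 \<le> hausdorff_dim (gls_C q a (e ` {..<k}))" for k
      by (rule hausdorff_dim_ge[OF null]) simp
    hence "t \<le> hausdorff_dim (gls_C q a (e ` {..<k}))" for k using True by (smt (verit))
    thus ?thesis by (intro always_eventually) blast
  next
    case False
    define t' where "t' = (t + Inf {t. subcritical q (range e) t}) / 2"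
    have "t < t'" using t by (simp add: t'_def)
    have "\<not> subcritical q (range e) t'"
    proof
      assume "subcritical q (range e) t'"
      hence "Inf {t. subcritical q (range e) t} \<le> t'"
        by (intro cInf_lower bdd_belowI[of _ 0]) (simp_all add: subcritical_def)
      thus False using t by (simp add: t'_def)
    qed
    then obtain F where F: "finite F" "F \<subseteq> range e" "1 < (\<Sum>i\<in>F. q i powr t)"
      using exists_finite_supercritical[of t t'] False \<open>t < t'\<close> by (metis not_less)
    obtain G where G: "finite G" "F = e ` G" using finite_subset_image[OF F(1,2)] by blast
    obtain K where "G \<subseteq> {..<K}" using finite_nat_bounded[OF G(1)] by blast
    hence K: "F \<subseteq> e ` {..<K}" using G(2) by blast
    have "t \<le> hausdorff_dim (gls_C q a (e ` {..<k}))" if "K \<le> k" for k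
    proof (rule le_hausdorff_dim_gls_C[OF _ _ null])
      have "(\<Sum>i\<in>F. q i powr t) \<le> (\<Sum>i\<in>e ` {..<k}. q i powr t)"
        using K that by (intro sum_mono2) auto
      thus "1 \<le> (\<Sum>i\<in>e ` {..<k}. q i powr t)" using F(3) by simp
    qed simp
    thus ?thesis unfolding eventually_sequentially by blast
  qed
qed

end

lemma tendsto_of_upper_bound:
  fixes f :: "nat \<Rightarrow> real"
  assumes "\<And>k. f k \<le> L" "\<And>t. t < L \<Longrightarrow> \<forall>\<^sub>F k in sequentially. t \<le> f k"
  shows "f \<longlonglongrightarrow> L"
proof (rule order_tendstoI)
  fix y assume "y < L"
  have "\<forall>\<^sub>F k in sequentially. (y + L) / 2 \<le> f k" using \<open>y < L\<close> by (intro assms(2)) simp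
  thus "\<forall>\<^sub>F k in sequentially. y < f k"
    by eventually_elim (use \<open>y < L\<close> in simp)
next
  fix y assume "L < y"
  hence "f k < y" for k using assms(1)[of k] by linarith
  thus "\<forall>\<^sub>F k in sequentially. f k < y" by simp
qed

theorem theorem2:
  fixes q a :: "nat \<Rightarrow> real" and V :: "nat set" and e :: "nat \<Rightarrow> nat"
  assumes "gls_system q a"
    and "infinite V"
    and "bij_betw e UNIV V"
    and "\<not> (\<exists>x\<in>{0..1}. ((\<lambda>i. q i powr x) has_sum 1) V)"
  shows "(\<lambda>k. hausdorff_dim (gls_C q a (e ` {..<k}))) \<longlonglongrightarrow> hausdorff_dim (gls_C q a V)"
proof -
  interpret gls q a by (rule gls.intro) (fact assms(1))
  have V: "V = range e" using assms(3) by (simp add: bij_betw_def)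
  define d where "d = Inf {t. subcritical q V t}"
  have "\<not> ((\<lambda>i. q i powr 1) has_sum 1) V"
    using assms(4) by (meson atLeastAtMost_iff order_refl zero_le_one)
  moreover have "(\<lambda>i. q i powr 1) = q" using q_pos by (simp add: less_imp_le)
  ultimately have sub1: "subcritical q V 1" by (intro subcritical_1) simp
  have upper: "hausdorff_dim (gls_C q a V) \<le> d"
    unfolding d_def by (rule hausdorff_dim_gls_C_le[OF sub1])
  have mono: "hausdorff_dim (gls_C q a (e ` {..<k})) \<le> hausdorff_dim (gls_C q a V)" for k
    using hausdorff_measure_gls_C_eq_0[OF sub1] V by (intro hausdorff_dim_mono gls_C_mono) auto
  have lim: "(\<lambda>k. hausdorff_dim (gls_C q a (e ` {..<k}))) \<longlonglongrightarrow> d"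
    using eventually_le_hausdorff_dim_gls_C_prefixes[of e 1] sub1 mono upper
    unfolding d_def V by (intro tendsto_of_upper_bound) (auto intro: order_trans)
  hence "d \<le> hausdorff_dim (gls_C q a V)" using mono by (intro LIMSEQ_le_const2) auto
  thus ?thesis using lim upper by simp
qed

end
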